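(* For every integer $n\geq 5$, $\dot{\imath}_{[1,2]}(P_5\Box P_n)=\left\lfloor \frac{6n+8}{5}\right\rfloor$.
   Context: $P_k$ denotes the path on $k$ vertices and $P_m\Box P_n$ the Cartesian product of two paths (the $m\times n$ grid graph). A set $S$ of vertices of a graph $G$ is independent if no two vertices of $S$ are adjacent, and dominating if every vertex not in $S$ has at least one neighbor in $S$. An independent $[1,2]$-set of $G$ is an independent dominating set $S$ such that every vertex $v\in V(G)\setminus S$ has at least one and at most two neighbors in $S$. When $G$ has an independent $[1,2]$-set, $\dot{\imath}_{[1,2]}(G)$ denotes the minimum cardinality of an independent $[1,2]$-set of $G$ (the statement includes the existence of such a set). *)

theory Defs
  imports Main
begin

definition independent_12_set :: "'a set \<Rightarrow> ('a \<Rightarrow> 'a \<Rightarrow> bool) \<Rightarrow> 'a set \<Rightarrow> bool" where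
  "independent_12_set V E S \<longleftrightarrow>
     S \<subseteq> V \<and>
     (\<forall>u\<in>S. \<forall>v\<in>S. \<not> E u v) \<and>
     (\<forall>v\<in>V - S. 1 \<le> card {u\<in>S. E v u} \<and> card {u\<in>S. E v u} \<le> 2)"

definition grid_vertices :: "nat \<Rightarrow> nat \<Rightarrow> (nat \<times> nat) set" where
  "grid_vertices m n = {1..m} \<times> {1..n}"

definition grid_adj :: "nat \<times> nat \<Rightarrow> nat \<times> nat \<Rightarrow> bool" where
  "grid_adj p q \<longleftrightarrow>
     (fst p = fst q \<and> (snd p + 1 = snd q \<or> snd q + 1 = snd p)) \<or>
     (snd p = snd q \<and> (fst p + 1 = fst q \<or> fst q + 1 = fst p))"

(* minimum cardinality of an independent [1,2]-set (meaningful when one exists) *)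
definition i12 :: "'a set \<Rightarrow> ('a \<Rightarrow> 'a \<Rightarrow> bool) \<Rightarrow> nat" where
  "i12 V E = (LEAST k. \<exists>S. independent_12_set V E S \<and> card S = k)"

end

theory Submission
  imports Defs
begin

text \<open>Whether a set of grid vertices is an independent [1,2]-set can be decided column by
column: each column must satisfy a condition involving only itself and its two neighbouring
columns. On five rows a column is one of the 13 independent subsets of \<open>P\<^sub>5\<close>, so the
independent [1,2]-sets of \<open>P\<^sub>5 \<box> P\<^sub>n\<close> are the words of length n over these 13 letters,
padded by empty columns on both sides, in which every three consecutive letters are compatible.

For the lower bound, a table of potentials on pairs of consecutive letters is checked to start
at 0, to grow by at most \<open>5 |x\<^sub>j| - 6\<close> along every compatible triple, and to be at least 4 on
every pair that can end a word of length at least 5; hence \<open>5 |S| - 6 n \<ge> 4\<close>. For the upper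
bound, optimal words are listed for \<open>5 \<le> n < 20\<close>, together with a block of 10 columns
carrying 12 vertices that can be inserted into them again and again.\<close>

section \<open>Column-wise characterisation on any number of rows\<close>

definition column :: "(nat \<times> nat) set \<Rightarrow> nat \<Rightarrow> nat \<Rightarrow> bool" where
  "column S j i \<longleftrightarrow> (i, j) \<in> S"

definition neighbour_count :: "(nat \<Rightarrow> bool) \<Rightarrow> (nat \<Rightarrow> bool) \<Rightarrow> (nat \<Rightarrow> bool) \<Rightarrow> nat \<Rightarrow> nat" where
  "neighbour_count a b c i = of_bool (b (i - 1)) + of_bool (b (Suc i)) + of_bool (a i) + of_bool (c i)"

definition column_ok :: "nat \<Rightarrow> (nat \<Rightarrow> bool) \<Rightarrow> (nat \<Rightarrow> bool) \<Rightarrow> (nat \<Rightarrow> bool) \<Rightarrow> bool" where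
  "column_ok m a b c \<longleftrightarrow> (\<forall>i\<in>{1..m}.
     if b i then \<not> a i \<and> \<not> c i \<and> \<not> b (Suc i) else neighbour_count a b c i \<in> {1..2})"

lemma card_grid_neighbours:
  assumes "1 \<le> i" "1 \<le> j"
  shows "card {u\<in>S. grid_adj (i, j) u}
       = neighbour_count (column S (j - 1)) (column S j) (column S (Suc j)) i"
proof -
  let ?N = "{(i - 1, j), (Suc i, j), (i, j - 1), (i, Suc j)}"
  have "{u\<in>S. grid_adj (i, j) u} = ?N \<inter> S"
    using assms by (auto simp: grid_adj_def)
  also have "card \<dots> = (\<Sum>u\<in>?N. of_bool (u \<in> S))"
    by simp
  also have "\<dots> = neighbour_count (column S (j - 1)) (column S j) (column S (Suc j)) i"
    using assms by (simp add: neighbour_count_def column_def del: sum_of_bool_eq)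
  finally show ?thesis .
qed

lemma column_ok_of_independent_12_set:
  assumes S: "independent_12_set (grid_vertices m n) grid_adj S" and j: "j \<in> {1..n}"
  shows "column_ok m (column S (j - 1)) (column S j) (column S (Suc j))"
  unfolding column_ok_def
proof
  fix i assume i: "i \<in> {1..m}"
  show "if column S j i then \<not> column S (j - 1) i \<and> \<not> column S (Suc j) i \<and> \<not> column S j (Suc i)
        else neighbour_count (column S (j - 1)) (column S j) (column S (Suc j)) i \<in> {1..2}"
  proof (cases "(i, j) \<in> S")
    case True
    have "grid_adj (i, j) (i, j - 1)" "grid_adj (i, j) (i, Suc j)" "grid_adj (i, j) (Suc i, j)"
      using j by (auto simp: grid_adj_def)
    with True S show ?thesis by (auto simp: column_def independent_12_set_def)
  next
    case False
    with i j have "(i, j) \<in> grid_vertices m n - S" by (simp add: grid_vertices_def)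
    with S have "card {u\<in>S. grid_adj (i, j) u} \<in> {1..2}"
      by (auto simp: independent_12_set_def)
    with False i j show ?thesis by (simp add: card_grid_neighbours column_def)
  qed
qed

lemma independent_12_set_grid_iff:
  assumes sub: "S \<subseteq> grid_vertices m n"
  shows "independent_12_set (grid_vertices m n) grid_adj S \<longleftrightarrow>
         (\<forall>j\<in>{1..n}. column_ok m (column S (j - 1)) (column S j) (column S (Suc j)))"
    (is "_ \<longleftrightarrow> (\<forall>j\<in>{1..n}. ?ok j)")
proof
  assume cols: "\<forall>j\<in>{1..n}. ?ok j"
  have ok: "if (i, j) \<in> S then (i, j - 1) \<notin> S \<and> (i, Suc j) \<notin> S \<and> (Suc i, j) \<notin> S
      else neighbour_count (column S (j - 1)) (column S j) (column S (Suc j)) i \<in> {1..2}"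
    if "(i, j) \<in> grid_vertices m n" for i j
  proof -
    from that have "i \<in> {1..m}" "j \<in> {1..n}"
      by (auto simp: grid_vertices_def)
    with cols have "if column S j i then \<not> column S (j - 1) i \<and> \<not> column S (Suc j) i
        \<and> \<not> column S j (Suc i) else neighbour_count (column S (j - 1)) (column S j)
        (column S (Suc j)) i \<in> {1..2}"
      unfolding column_ok_def by blast
    then show ?thesis by (auto simp: column_def)
  qed
  have "(i, Suc j) \<notin> S \<and> (Suc i, j) \<notin> S" if "(i, j) \<in> S" for i j
    using ok[of i j] that sub by auto
  then have "\<not> grid_adj u v" if "u \<in> S" "v \<in> S" for u v
    using that by (cases u; cases v) (auto simp: grid_adj_def)
  moreover have "card {u\<in>S. grid_adj v u} \<in> {1..2}" if "v \<in> grid_vertices m n - S" for v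
  proof -
    obtain i j where v: "v = (i, j)"
      by fastforce
    with that have "(i, j) \<in> grid_vertices m n" "(i, j) \<notin> S" "1 \<le> i" "1 \<le> j"
      by (auto simp: grid_vertices_def)
    with ok[OF this(1)] show ?thesis
      by (simp add: v card_grid_neighbours)
  qed
  ultimately show "independent_12_set (grid_vertices m n) grid_adj S"
    using sub by (auto simp: independent_12_set_def)
qed (use column_ok_of_independent_12_set in blast)

lemma card_eq_sum_column_sizes:
  assumes "S \<subseteq> grid_vertices m n"
  shows "card S = (\<Sum>j=1..n. card {i. column S j i})"
proof -
  have "{i. column S j i} \<subseteq> {1..m}" for j
    using assms by (auto simp: column_def grid_vertices_def)
  then have fin: "finite {i. column S j i}" for j
    by (meson finite_atLeastAtMost finite_subset)
  have S_eq: "S = (\<Union>j\<in>{1..n}. (\<lambda>i. (i, j)) ` {i. column S j i})"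
    using assms by (auto simp: column_def grid_vertices_def)
  have "card S = (\<Sum>j=1..n. card ((\<lambda>i. (i, j)) ` {i. column S j i}))"
    by (subst S_eq, rule card_UN_disjoint) (auto simp: fin)
  also have "\<dots> = (\<Sum>j=1..n. card {i. column S j i})"
    by (simp add: card_image inj_on_def)
  finally show ?thesis .
qed

lemma i12_eqI:
  assumes "independent_12_set V E S" "card S = k"
    and "\<And>T. independent_12_set V E T \<Longrightarrow> k \<le> card T"
  shows "i12 V E = k"
  unfolding i12_def by (rule Least_equality) (use assms in auto)

section \<open>Five rows: columns as letters of a word\<close>

definition column_patterns :: "bool list list" where
  "column_patterns = [[False,False,False,False,False],
    [True,False,False,False,False],
    [False,True,False,False,False],
    [False,False,True,False,False],
    [True,False,True,False,False],
    [False,False,False,True,False],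
    [True,False,False,True,False],
    [False,True,False,True,False],
    [False,False,False,False,True],
    [True,False,False,False,True],
    [False,True,False,False,True],
    [False,False,True,False,True],
    [True,False,True,False,True]]"

definition pattern :: "nat \<Rightarrow> nat \<Rightarrow> bool" where
  "pattern a i \<longleftrightarrow> 1 \<le> i \<and> i \<le> 5 \<and> column_patterns ! a ! (i - 1)"

definition pattern_size :: "nat \<Rightarrow> nat" where
  "pattern_size a = length (filter (pattern a) [1..<6])"

definition compatible :: "nat \<Rightarrow> nat \<Rightarrow> nat \<Rightarrow> bool" where
  "compatible a b c \<longleftrightarrow> column_ok 5 (pattern a) (pattern b) (pattern c)"

lemma pattern_rows: "pattern a i \<Longrightarrow> i \<in> {1..5}"
  by (simp add: pattern_def)

lemma pattern_zero: "\<not> pattern 0 i"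
  by (simp add: pattern_def column_patterns_def nth_Cons')

lemma card_pattern: "card {i. pattern a i} = pattern_size a"
proof -
  have "card {i. pattern a i} = card (set (filter (pattern a) [1..<6]))"
    by (rule arg_cong[where f = card]) (auto simp: pattern_def)
  also have "\<dots> = pattern_size a"
    unfolding pattern_size_def by (rule distinct_card) simp
  finally show ?thesis .
qed

lemma pattern_empty_iff:
  assumes "a < 13"
  shows "(\<forall>i. \<not> pattern a i) \<longleftrightarrow> a = 0"
proof -
  have "list_all (\<lambda>a. \<exists>i\<in>{1..5}. pattern a i) [1..<13]"
    by code_simp
  then show ?thesis
    using assms pattern_zero by (cases "a = 0") (auto simp: list_all_iff)
qed

lemma column_is_pattern:
  fixes P :: "nat \<Rightarrow> bool"
  assumes rows: "\<And>i. P i \<Longrightarrow> 1 \<le> i \<and> i \<le> 5" and indep: "\<And>i. P i \<Longrightarrow> \<not> P (Suc i)"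
  shows "\<exists>a<13. P = pattern a"
proof -
  define xs where "xs = [P 1, P 2, P 3, P 4, P 5]"
  have P_eq: "P i = (1 \<le> i \<and> i \<le> 5 \<and> xs ! (i - 1))" for i
    using rows[of i] by (cases "i \<in> {1..5}") (auto simp: xs_def numeral_eq_Suc le_Suc_eq)
  have "\<not> (P 1 \<and> P 2)" "\<not> (P 2 \<and> P 3)" "\<not> (P 3 \<and> P 4)" "\<not> (P 4 \<and> P 5)"
    using indep[of 1] indep[of 2] indep[of 3] indep[of 4] by (auto simp: numeral_eq_Suc)
  then have "xs \<in> set column_patterns"
    unfolding xs_def column_patterns_def
    by (cases "P 1"; cases "P 2"; cases "P 3"; cases "P 4"; cases "P 5") simp_all
  moreover have "length column_patterns = 13"
    by (simp add: column_patterns_def)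
  ultimately obtain a where "a < 13" "column_patterns ! a = xs"
    by (auto simp: in_set_conv_nth)
  with P_eq show ?thesis
    by (auto simp: pattern_def fun_eq_iff)
qed

lemma independent_12_set_grid5_word:
  assumes S: "independent_12_set (grid_vertices 5 n) grid_adj S"
  obtains x where "\<And>j. x j < 13" "\<And>j. column S j = pattern (x j)" "x 0 = 0" "x (Suc n) = 0"
    "\<And>j. j \<in> {1..n} \<Longrightarrow> compatible (x (j - 1)) (x j) (x (Suc j))"
proof -
  have sub: "S \<subseteq> grid_vertices 5 n"
    using S by (simp add: independent_12_set_def)
  have "\<exists>a<13. column S j = pattern a" for j
  proof (rule column_is_pattern)
    fix i assume i: "column S j i"
    then have ij: "i \<in> {1..5}" "j \<in> {1..n}"
      using sub by (auto simp: column_def grid_vertices_def)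
    then show "1 \<le> i \<and> i \<le> 5" by simp
    from column_ok_of_independent_12_set[OF S ij(2)] ij(1)
    have "if column S j i then \<not> column S (j - 1) i \<and> \<not> column S (Suc j) i
        \<and> \<not> column S j (Suc i) else neighbour_count (column S (j - 1)) (column S j)
        (column S (Suc j)) i \<in> {1..2}"
      unfolding column_ok_def by blast
    with i show "\<not> column S j (Suc i)" by simp
  qed
  then obtain x where x_lt: "\<And>j. x j < 13" and x_col: "\<And>j. column S j = pattern (x j)"
    by metis
  have x_empty: "x j = 0" if "j = 0 \<or> j = Suc n" for j
  proof -
    have "\<not> column S j i" for i
      using sub that by (auto simp: column_def grid_vertices_def)
    then show ?thesis
      using pattern_empty_iff[OF x_lt[of j]] by (simp add: x_col)
  qed
  have x_compatible: "compatible (x (j - 1)) (x j) (x (Suc j))" if "j \<in> {1..n}" for j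
    using column_ok_of_independent_12_set[OF S that] by (simp add: x_col compatible_def)
  show thesis
    using x_empty[of 0] x_empty[of "Suc n"] by (intro that[OF x_lt x_col _ _ x_compatible]) simp_all
qed

section \<open>Lower bound\<close>

text \<open>Tabulated only to speed up the evaluation of the certificate check below.\<close>

definition successors :: "nat list list list" where
  "successors = [[[],[],[],[9],[8],[],[0,2,3,8,10,11],[0,1,8,9],[],[3],[0,1,3,4,5,6],[1],[0]],
 [[],[],[],[8,9,10],[],[2,10],[],[0,8],[],[],[0,3,5],[0,1,2],[]],
 [[],[],[],[9],[],[1,4,9,12],[0,3,8,11],[],[4],[3],[],[1],[]],
 [[],[],[],[],[],[],[0,2,8,10],[],[],[0,2,3,5,7],[0,1,5,6],[],[]],
 [[],[],[],[],[],[2,10],[],[],[2,7],[],[0,5],[],[]],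
 [[],[11],[8,9,11,12],[9],[8],[],[],[],[],[3],[0,1,3,4],[],[]],
 [[],[],[8,11],[8,9,10],[],[],[],[],[],[],[0,3],[],[]],
 [[12],[11],[],[9],[],[],[],[],[4],[3],[],[],[]],
 [[],[],[5,6],[1,6,9],[0,5,8],[],[0,2,3],[0,1],[],[],[],[],[]],
 [[],[],[5],[0,1,2,5,6,7,8,9,10],[],[2],[],[0],[],[],[],[],[]],
 [[],[],[],[1,6,9],[],[1,4],[0,3],[],[],[],[],[],[]],
 [[],[5,7],[5,6],[],[],[],[0,2],[],[],[],[],[],[]],
 [[7],[],[5],[],[],[2],[],[],[],[],[],[],[]]]"

lemma successors_eq:
  assumes "a < 13" "b < 13"
  shows "successors ! a ! b = filter (compatible a b) [0..<13]"
proof -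
  have "list_all (\<lambda>a. list_all (\<lambda>b.
      filter (compatible a b) [0..<13] = successors ! a ! b) [0..<13]) [0..<13]"
    by code_simp
  with assms show ?thesis by (simp add: list_all_iff)
qed

text \<open>A computer-generated certificate. Entry \<open>potential_table ! k ! a ! b\<close> concerns
the pair of letters \<open>(a, b)\<close> at positions \<open>(j, j + 1)\<close> with \<open>k = min j 5\<close>; the value
1000 marks pairs that cannot occur there.\<close>

definition potential_table :: "int list list list" where
  "potential_table = [[[0,0,0,0,0,0,0,0,0,0,0,0,0],
  [1000,1000,1000,1000,1000,1000,1000,1000,1000,1000,1000,1000,1000],
  [1000,1000,1000,1000,1000,1000,1000,1000,1000,1000,1000,1000,1000],
  [1000,1000,1000,1000,1000,1000,1000,1000,1000,1000,1000,1000,1000],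
  [1000,1000,1000,1000,1000,1000,1000,1000,1000,1000,1000,1000,1000],
  [1000,1000,1000,1000,1000,1000,1000,1000,1000,1000,1000,1000,1000],
  [1000,1000,1000,1000,1000,1000,1000,1000,1000,1000,1000,1000,1000],
  [1000,1000,1000,1000,1000,1000,1000,1000,1000,1000,1000,1000,1000],
  [1000,1000,1000,1000,1000,1000,1000,1000,1000,1000,1000,1000,1000],
  [1000,1000,1000,1000,1000,1000,1000,1000,1000,1000,1000,1000,1000],
  [1000,1000,1000,1000,1000,1000,1000,1000,1000,1000,1000,1000,1000],
  [1000,1000,1000,1000,1000,1000,1000,1000,1000,1000,1000,1000,1000],
  [1000,1000,1000,1000,1000,1000,1000,1000,1000,1000,1000,1000,1000]],
 [[1000,1000,1000,1000,1000,1000,1000,1000,1000,1000,1000,1000,1000],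
  [1000,1000,1000,1000,1000,1000,1000,1000,1000,1000,1000,1000,1000],
  [1000,1000,1000,1000,1000,1000,1000,1000,1000,1000,1000,1000,1000],
  [1000,1000,1000,1000,1000,1000,1000,1000,1000,(-1),1000,1000,1000],
  [1000,1000,1000,1000,1000,1000,1000,1000,4,1000,1000,1000,1000],
  [1000,1000,1000,1000,1000,1000,1000,1000,1000,1000,1000,1000,1000],
  [4,1000,4,4,1000,1000,1000,1000,4,1000,4,4,1000],
  [4,4,1000,1000,1000,1000,1000,1000,4,4,1000,1000,1000],
  [1000,1000,1000,1000,1000,1000,1000,1000,1000,1000,1000,1000,1000],
  [1000,1000,1000,4,1000,1000,1000,1000,1000,1000,1000,1000,1000],
  [4,4,1000,4,4,4,4,1000,1000,1000,1000,1000,1000],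
  [1000,4,1000,1000,1000,1000,1000,1000,1000,1000,1000,1000,1000],
  [9,1000,1000,1000,1000,1000,1000,1000,1000,1000,1000,1000,1000]],
 [[1000,1000,1000,1000,1000,1000,1000,3,1000,1000,1000,1000,(-2)],
  [1000,1000,1000,1000,1000,3,1000,3,1000,1000,1000,3,1000],
  [1000,1000,1000,1000,1000,1000,1000,1000,3,1000,1000,3,1000],
  [3,3,3,1000,1000,3,3,3,3,3,3,1000,1000],
  [1000,1000,1000,1000,1000,1000,1000,1000,1000,1000,1000,1000,1000],
  [1000,3,1000,1000,3,1000,1000,1000,1000,1000,1000,1000,1000],
  [8,1000,1000,8,1000,1000,1000,1000,1000,1000,1000,1000,1000],
  [1000,1000,1000,1000,1000,1000,1000,1000,1000,1000,1000,1000,1000],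
  [1000,1000,3,1000,3,1000,1000,3,1000,1000,1000,1000,1000],
  [3,1000,3,3,1000,3,1000,3,1000,1000,1000,1000,1000],
  [8,1000,1000,8,1000,1000,1000,1000,1000,1000,1000,1000,1000],
  [1000,1000,1000,1000,1000,1000,1000,1000,1000,1000,1000,1000,1000],
  [1000,1000,1000,1000,1000,1000,1000,1000,1000,1000,1000,1000,1000]],
 [[1000,1000,1000,1000,1000,1000,1000,1000,1000,1000,1000,1000,1000],
  [1000,1000,1000,1000,1000,1000,1000,1000,1000,1000,1000,2,1000],
  [1000,1000,1000,1000,1000,2,2,1000,1000,1000,1000,1000,1000],
  [2,2,2,1000,1000,2,2,2,2,2,2,1000,1000],
  [7,1000,1000,1000,1000,7,1000,1000,7,1000,1000,1000,1000],
  [1000,1000,2,1000,1000,1000,1000,1000,1000,1000,2,1000,1000],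
  [7,1000,7,1000,1000,1000,1000,1000,7,1000,7,1000,1000],
  [7,7,1000,1000,1000,1000,1000,1000,7,7,1000,1000,1000],
  [1000,1000,1000,1000,2,1000,1000,1000,1000,1000,1000,1000,1000],
  [7,1000,7,7,1000,7,1000,7,1000,1000,1000,1000,1000],
  [7,7,1000,1000,1000,7,7,1000,1000,1000,1000,1000,1000],
  [7,7,7,1000,1000,1000,1000,1000,1000,1000,1000,1000,1000],
  [7,1000,1000,1000,1000,1000,1000,1000,1000,1000,1000,1000,1000]],
 [[1000,1000,1000,1000,1000,1000,1000,1,1000,1000,1000,1000,1],
  [1000,1000,1000,1000,1000,6,1000,6,1000,1000,1000,6,1000],
  [1000,1000,1000,1000,1000,6,6,1000,1,1,1000,1,1],
  [6,6,6,1000,1000,6,6,6,6,6,6,1000,1000],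
  [6,1000,1000,1000,1000,6,1000,1000,6,1000,1000,1000,1000],
  [1000,1,6,1000,1,1000,1000,1000,1000,1,6,1000,1],
  [6,1000,6,6,1000,1000,1000,1000,6,1000,6,6,1000],
  [11,1000,1000,1000,1000,1000,1000,1000,1000,1000,1000,1000,1000],
  [1000,1000,6,1000,6,1000,1000,6,1000,1000,1000,1000,1000],
  [6,1000,6,6,1000,6,1000,6,1000,1000,1000,1000,1000],
  [6,6,1000,6,6,6,6,1000,1000,1000,1000,1000,1000],
  [6,6,6,1000,1000,1000,1000,1000,1000,1000,1000,1000,1000],
  [1000,1000,1000,1000,1000,1000,1000,1000,1000,1000,1000,1000,1000]],
 [[1000,1000,1000,1000,1000,1000,1000,2,1000,1000,1000,1000,(-1)],
  [1000,1000,1000,1000,1000,3,1000,3,1000,1000,1000,0,1000],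
  [1000,1000,1000,1000,1000,2,2,1000,1,1,1000,1,1],
  [4,4,4,1000,1000,4,4,4,4,4,4,1000,1000],
  [4,1000,1000,1000,1000,4,1000,1000,4,1000,1000,1000,1000],
  [1000,1,2,1000,1,1000,1000,1000,1000,1,2,1000,1],
  [6,1000,8,6,1000,1000,1000,1000,6,1000,8,6,1000],
  [5,5,1000,1000,1000,1000,1000,1000,5,5,1000,1000,1000],
  [1000,1000,3,1000,0,1000,1000,3,1000,1000,1000,1000,1000],
  [8,1000,8,5,1000,8,1000,8,1000,1000,1000,1000,1000],
  [6,6,1000,6,6,8,8,1000,1000,1000,1000,1000,1000],
  [4,4,4,1000,1000,1000,1000,1000,1000,1000,1000,1000,1000],
  [8,1000,1000,1000,1000,1000,1000,1000,1000,1000,1000,1000,1000]]]"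

definition potential :: "nat \<Rightarrow> nat \<Rightarrow> nat \<Rightarrow> int" where
  "potential k a b = potential_table ! k ! a ! b"

lemma potential_step:
  assumes "k \<le> 5" "a < 13" "b < 13" "c < 13" "compatible a b c" "potential k a b < 1000"
  shows "potential (min (Suc k) 5) b c < 1000 \<and>
         potential (min (Suc k) 5) b c \<le> potential k a b + 5 * int (pattern_size b) - 6"
proof -
  have "list_all (\<lambda>k. list_all (\<lambda>a. list_all (\<lambda>b. list_all (\<lambda>c.
      potential (min (Suc k) 5) b c < 1000 \<and>
      potential (min (Suc k) 5) b c \<le> potential k a b + 5 * int (pattern_size b) - 6)
      (if potential k a b < 1000 then successors ! a ! b else [])) [0..<13]) [0..<13]) [0..<6]"
    by code_simp
  with assms show ?thesis
    by (simp add: list_all_iff successors_eq less_Suc_eq_le)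
qed

lemma potential_start:
  assumes "b < 13"
  shows "potential 0 0 b = 0"
proof -
  have "list_all (\<lambda>b. potential 0 0 b = 0) [0..<13]"
    by code_simp
  with assms show ?thesis by (simp add: list_all_iff)
qed

lemma potential_final:
  assumes "a < 13"
  shows "4 \<le> potential 5 a 0"
proof -
  have "list_all (\<lambda>a. 4 \<le> potential 5 a 0) [0..<13]"
    by code_simp
  with assms show ?thesis by (simp add: list_all_iff)
qed

lemma potential_le_prefix_sum:
  assumes "\<And>j. x j < 13" "x 0 = 0"
    and "\<And>j. j \<in> {1..n} \<Longrightarrow> compatible (x (j - 1)) (x j) (x (Suc j))"
    and "m \<le> n"
  shows "potential (min m 5) (x m) (x (Suc m)) < 1000 \<and>
         potential (min m 5) (x m) (x (Suc m)) \<le> (\<Sum>j=1..m. 5 * int (pattern_size (x j)) - 6)"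
  using \<open>m \<le> n\<close>
proof (induction m)
  case 0
  then show ?case using assms(1,2) potential_start by simp
next
  case (Suc m)
  have "compatible (x m) (x (Suc m)) (x (Suc (Suc m)))"
    using assms(3)[of "Suc m"] Suc.prems by simp
  moreover have "min (Suc (min m 5)) 5 = min (Suc m) 5"
    by simp
  ultimately show ?case
    using Suc assms(1) potential_step[of "min m 5" "x m" "x (Suc m)" "x (Suc (Suc m))"] by simp
qed

lemma independent_12_set_grid5_card_ge:
  assumes n: "5 \<le> n" and S: "independent_12_set (grid_vertices 5 n) grid_adj S"
  shows "(6 * n + 8) div 5 \<le> card S"
proof -
  obtain x where x: "\<And>j. x j < 13" "\<And>j. column S j = pattern (x j)" "x 0 = 0" "x (Suc n) = 0"
    "\<And>j. j \<in> {1..n} \<Longrightarrow> compatible (x (j - 1)) (x j) (x (Suc j))"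
    using independent_12_set_grid5_word[OF S] by blast
  have "4 \<le> potential 5 (x n) 0"
    using potential_final x(1) by blast
  also have "\<dots> \<le> (\<Sum>j=1..n. 5 * int (pattern_size (x j)) - 6)"
    using potential_le_prefix_sum[where x = x and n = n and m = n] x n by (simp add: min_absorb2)
  also have "\<dots> = 5 * int (\<Sum>j=1..n. card {i. column S j i}) - 6 * int n"
    by (simp add: x(2) card_pattern sum_subtractf sum_distrib_left)
  also have "\<dots> = 5 * int (card S) - 6 * int n"
    using S card_eq_sum_column_sizes[of S 5 n] by (simp add: independent_12_set_def)
  finally show ?thesis by linarith
qed

section \<open>Upper bound\<close>

text \<open>The letter after the last one is the empty column 0, hence \<open>hd (r @ [0])\<close>.\<close>

fun valid_word :: "nat \<Rightarrow> nat list \<Rightarrow> bool" where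
  "valid_word a [] = True"
| "valid_word a (b # r) = (compatible a b (hd (r @ [0])) \<and> valid_word b r)"

definition letter :: "nat list \<Rightarrow> nat \<Rightarrow> nat" where
  "letter w j = (if j < length w then w ! j else 0)"

lemma letter_Cons_Suc: "letter (a # w) (Suc j) = letter w j"
  by (simp add: letter_def)

lemma valid_word_compatible:
  "valid_word a w \<Longrightarrow> j \<in> {1..length w} \<Longrightarrow>
   compatible (letter (a # w) (j - 1)) (letter (a # w) j) (letter (a # w) (Suc j))"
proof (induction w arbitrary: a j)
  case (Cons b r)
  show ?case
  proof (cases "j = 1")
    case True
    with Cons.prems show ?thesis by (cases r) (simp_all add: letter_def)
  next
    case False
    define k where "k = j - 2"
    have "j = Suc (Suc k)"
      using False Cons.prems unfolding k_def by auto
    with Cons.prems Cons.IH[of b "Suc k"] show ?thesis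
      by (simp add: letter_Cons_Suc)
  qed
qed simp

lemma independent_12_set_of_valid_word:
  assumes "valid_word 0 w"
  obtains S where "independent_12_set (grid_vertices 5 (length w)) grid_adj S"
    "card S = sum_list (map pattern_size w)"
proof -
  let ?x = "letter (0 # w)"
  define S where "S = {(i, j). 1 \<le> j \<and> pattern (?x j) i}"
  have col: "column S j = pattern (?x j)" for j
    by (cases j) (auto simp: S_def column_def letter_def pattern_zero fun_eq_iff)
  have sub: "S \<subseteq> grid_vertices 5 (length w)"
    by (auto simp: S_def grid_vertices_def letter_def pattern_zero dest: pattern_rows split: if_splits)
  have ind: "independent_12_set (grid_vertices 5 (length w)) grid_adj S"
    using valid_word_compatible[OF assms]
    by (simp add: independent_12_set_grid_iff[OF sub] col compatible_def)
  have "card S = (\<Sum>j=1..length w. pattern_size (?x j))"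
    by (simp add: card_eq_sum_column_sizes[OF sub] col card_pattern)
  also have "\<dots> = sum_list (map pattern_size w)"
    by (simp add: sum_list_sum_nth sum.atLeast1_atMost_eq atLeast0LessThan letter_def)
  finally show thesis
    using that ind by blast
qed

text \<open>The block begins with the letters 1, 5 and may again be followed by 1, 5, so it closes a
cycle of compatible triples through the pair \<open>(1, 5)\<close>.\<close>

definition period :: "nat list" where
  "period = [1, 5, 2, 8, 4, 8, 2, 5, 1, 11]"

lemma valid_word_insert_period:
  "valid_word a (u @ 1 # 5 # r) \<Longrightarrow> valid_word a (u @ period @ 1 # 5 # r)"
proof (induction u arbitrary: a)
  case Nil
  have "compatible 1 5 2 \<and> compatible 5 2 8 \<and> compatible 2 8 4 \<and> compatible 8 4 8
    \<and> compatible 4 8 2 \<and> compatible 8 2 5 \<and> compatible 2 5 1 \<and> compatible 5 1 11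
    \<and> compatible 1 11 1 \<and> compatible 11 1 5"
    by code_simp
  with Nil show ?case by (simp add: period_def)
next
  case (Cons b u)
  from Cons.prems have "valid_word b (u @ 1 # 5 # r)"
    by simp
  then have "valid_word b (u @ period @ 1 # 5 # r)"
    by (rule Cons.IH)
  moreover have "hd (u @ period @ 1 # 5 # r @ [0]) = hd (u @ 1 # 5 # r @ [0])"
    by (cases u) (simp_all add: period_def)
  ultimately show ?case
    using Cons.prems by simp
qed

lemma pattern_size_period: "sum_list (map pattern_size period) = 12"
  by code_simp

definition short_words :: "nat list list" where
  "short_words = [[3,9,3,9,3], [3,9,2,5,1,11], [3,9,2,5,4,8,7], [3,9,2,5,1,11,1,7],
    [3,9,2,5,1,11,1,5,10]]"

definition split_words :: "(nat list \<times> nat list) list" where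
  "split_words = [([3,9,5,2,11], [2,8,4]), ([3,9,2,5,1,11], [2,8,4]), ([3,9,2,5,1,11], [2,9,3,6]),
    ([3,9,2,5,1,11], [2,8,4,5,10]), ([3,9,2,5,1,11], [2,8,4,8,2,6]),
    ([3,9,2,5,1,11], [2,8,4,5,2,8,4]), ([3,9,2,5,1,11], [2,8,4,8,2,5,1,11]),
    ([3,9,2,5,1,11], [2,8,4,5,2,8,4,5,10]), ([3,9,2,5,1,11], [2,8,4,5,2,8,4,8,2,6]),
    ([3,9,2,5,1,11], [2,8,4,5,2,8,4,5,2,8,4])]"

definition optimal_word :: "nat \<Rightarrow> nat list \<Rightarrow> bool" where
  "optimal_word n w \<longleftrightarrow>
     length w = n \<and> valid_word 0 w \<and> sum_list (map pattern_size w) = (6 * n + 8) div 5"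

lemma optimal_split_word_exists:
  "10 \<le> n \<Longrightarrow> \<exists>u r. optimal_word n (u @ 1 # 5 # r)"
proof (induction n rule: less_induct)
  case (less n)
  show ?case
  proof (cases "n < 20")
    case True
    have "list_all (\<lambda>n. optimal_word n
        (fst (split_words ! (n - 10)) @ 1 # 5 # snd (split_words ! (n - 10)))) [10..<20]"
      unfolding optimal_word_def split_words_def by code_simp
    moreover have "n \<in> set [10..<20]"
      using True less.prems unfolding set_upt by simp
    ultimately have "optimal_word n
        (fst (split_words ! (n - 10)) @ 1 # 5 # snd (split_words ! (n - 10)))"
      unfolding list_all_iff by (rule bspec)
    then show ?thesis
      by blast
  next
    case False
    have "\<exists>u r. optimal_word (n - 10) (u @ 1 # 5 # r)"
      using less.IH[of "n - 10"] False by simp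
    then obtain u r where len: "length (u @ 1 # 5 # r) = n - 10"
      and valid: "valid_word 0 (u @ 1 # 5 # r)"
      and size: "sum_list (map pattern_size (u @ 1 # 5 # r)) = (6 * (n - 10) + 8) div 5"
      unfolding optimal_word_def by blast
    have "6 * n + 8 = 6 * (n - 10) + 8 + 12 * 5"
      using False by linarith
    then have bound: "(6 * (n - 10) + 8) div 5 + 12 = (6 * n + 8) div 5"
      by simp
    let ?w = "u @ period @ 1 # 5 # r"
    have "length ?w = length (u @ 1 # 5 # r) + 10"
      by (simp add: period_def)
    with len False have "length ?w = n"
      by linarith
    moreover have "sum_list (map pattern_size ?w) = sum_list (map pattern_size (u @ 1 # 5 # r)) + 12"
      using pattern_size_period by simp
    ultimately have "optimal_word n ?w"
      using size bound valid_word_insert_period[OF valid] unfolding optimal_word_def by linarith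
    then have "optimal_word n (u @ 1 # 5 # ([2, 8, 4, 8, 2, 5, 1, 11] @ 1 # 5 # r))"
      by (simp add: period_def)
    then show ?thesis
      by blast
  qed
qed

lemma optimal_word_exists: "5 \<le> n \<Longrightarrow> \<exists>w. optimal_word n w"
proof (cases "n < 10")
  case True
  have "list_all (\<lambda>n. optimal_word n (short_words ! (n - 5))) [5..<10]"
    unfolding optimal_word_def short_words_def by code_simp
  moreover assume "5 \<le> n"
  then have "n \<in> set [5..<10]"
    using True unfolding set_upt by simp
  ultimately have "optimal_word n (short_words ! (n - 5))"
    unfolding list_all_iff by (rule bspec)
  then show ?thesis ..
next
  case False
  then have "10 \<le> n"
    by simp
  then obtain u r where "optimal_word n (u @ 1 # 5 # r)"
    using optimal_split_word_exists by blast
  then show ?thesis ..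
qed

theorem mainTheorem6:
  fixes n :: nat
  assumes "n \<ge> 5"
  shows "(\<exists>S. independent_12_set (grid_vertices 5 n) grid_adj S)
         \<and> i12 (grid_vertices 5 n) grid_adj = (6 * n + 8) div 5"
proof -
  obtain w where w: "optimal_word n w"
    using optimal_word_exists[OF assms] by blast
  then obtain S where S: "independent_12_set (grid_vertices 5 n) grid_adj S"
    "card S = (6 * n + 8) div 5"
    using independent_12_set_of_valid_word[of w] by (auto simp: optimal_word_def)
  then have "i12 (grid_vertices 5 n) grid_adj = (6 * n + 8) div 5"
    by (rule i12_eqI) (rule independent_12_set_grid5_card_ge[OF assms])
  with S show ?thesis by blast
qed

end
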